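(* Let $N\ge1$ be an integer and $\phi\in\mathbb{C}\{t\}$ with $\phi(0)=0$. Suppose $\phi(t)\in\overline{\mathbb{H}}$ whenever $t$ (in the domain of convergence) satisfies $t^N\in\mathbb{R}$. Then there exist $\psi_0\in\mathbb{R}\{t\}$, an integer $L\ge1$, a real $b\ge0$, and $\psi_1\in\mathbb{C}\{t\}$ with $\psi_1(0)=1$ such that $$\phi(t)=\psi_0(t^N)+ib\,t^{2LN}\psi_1(t).$$ Moreover, $\phi(t)\in\mathbb{R}$ whenever $t^N\in\mathbb{R}$ if and only if $b=0$ can be taken above, i.e. $\phi(t)=\psi_0(t^N)$ for some $\psi_0\in\mathbb{R}\{t\}$.
   Context: $\mathbb{H}=\{z\in\mathbb{C}:\operatorname{Im}z>0\}$ and $\overline{\mathbb{H}}$ its closure. $\mathbb{C}\{t\}$ (resp. $\mathbb{R}\{t\}$) denotes convergent power series at $0$ with complex (resp. real) coefficients. *)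

theory Defs
  imports "HOL-Analysis.Analysis" "HOL-Computational_Algebra.Formal_Power_Series"
begin

definition convergent_ps :: "complex fps \<Rightarrow> bool" where
  "convergent_ps p \<longleftrightarrow> fps_conv_radius p > 0"

definition real_coeffs :: "complex fps \<Rightarrow> bool" where
  "real_coeffs p \<longleftrightarrow> (\<forall>n. fps_nth p n \<in> \<real>)"

definition in_conv_domain :: "complex fps \<Rightarrow> complex \<Rightarrow> bool" where
  "in_conv_domain p t \<longleftrightarrow> ereal (norm t) < fps_conv_radius p"

end

theory Submission
  imports Defs
begin

text \<open>Write \<open>\<phi> = \<psi>\<^sub>0(t\<^sup>N) + \<chi>\<close>, where \<open>\<psi>\<^sub>0\<close> collects the real parts of the coefficients of \<open>\<phi>\<close> at
  exponents divisible by \<open>N\<close>. For real \<open>r\<close> and \<open>\<omega>\<^sup>N\<close> real, \<open>\<psi>\<^sub>0((r\<omega>)\<^sup>N)\<close> is real, so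
  \<open>Im \<phi>(r\<omega>) = Im \<chi>(r\<omega>)\<close>; if \<open>c t\<^sup>m\<close> is the lowest-order term of \<open>\<chi>\<close>, letting \<open>r \<rightarrow> 0\<^sup>+\<close>
  gives \<open>Im (c \<omega>\<^sup>m) \<ge> 0\<close> for all such \<open>\<omega>\<close>. Summing over the \<open>2N\<close>-th roots of unity shows
  that this forces \<open>2N\<close> to divide \<open>m\<close> and \<open>c\<close> to be a positive multiple of \<open>\<i>\<close>, whence
  \<open>\<chi>(t) = \<i> b t^(2LN) \<psi>\<^sub>1(t)\<close> with \<open>b > 0\<close>. If \<open>\<phi>\<close> is real on the rays, this applies to \<open>-\<phi>\<close> as
  well, which is only possible if \<open>\<chi> = 0\<close>.\<close>

lemma fps_compose_X_power_nth:
  fixes a :: "'a::comm_semiring_1 fps"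
  assumes "N > 0"
  shows "fps_nth (a oo fps_X ^ N) n = (if N dvd n then fps_nth a (n div N) else 0)"
proof -
  have "fps_nth (a oo fps_X ^ N) n = (\<Sum>i=0..n. if i = n div N \<and> N dvd n then fps_nth a i else 0)"
    unfolding fps_compose_nth
    by (intro sum.cong refl) (use assms in \<open>auto simp flip: power_mult\<close>)
  also have "\<dots> = (if N dvd n then fps_nth a (n div N) else 0)"
    by simp
  finally show ?thesis .
qed

lemma conv_radius_pos_iff_geometric_bound:
  fixes f :: "nat \<Rightarrow> 'a::{banach, real_normed_div_algebra}"
  shows "0 < conv_radius f \<longleftrightarrow> (\<exists>C q. 0 < q \<and> (\<forall>n. norm (f n) \<le> C * q ^ n))"
proof
  assume "0 < conv_radius f"
  then obtain r where r: "0 < r" "ereal r < conv_radius f"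
    using ereal_dense2 by (metis ereal_less(2))
  have "summable (\<lambda>n. norm (f n * of_real r ^ n))"
    by (rule abs_summable_in_conv_radius) (use r in simp)
  then obtain K where K: "\<And>n. norm (f n * of_real r ^ n) \<le> K"
    using summable_imp_Bseq unfolding Bseq_def by fastforce
  have "norm (f n) \<le> K * (1 / r) ^ n" for n
    using K[of n] r(1) by (simp add: norm_mult norm_power field_simps)
  with r(1) show "\<exists>C q. 0 < q \<and> (\<forall>n. norm (f n) \<le> C * q ^ n)"
    by (intro exI[of _ K] exI[of _ "1 / r"]) auto
next
  assume "\<exists>C q. 0 < q \<and> (\<forall>n. norm (f n) \<le> C * q ^ n)"
  then obtain C q where q: "0 < q" and bound: "\<And>n. norm (f n) \<le> C * q ^ n" by blast
  define w where "w = 1 / (2 * q)"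
  define z :: 'a where "z = of_real w"
  have w: "w > 0" using q by (simp add: w_def)
  have nz: "norm z = w" using w by (simp add: z_def)
  have "summable (\<lambda>n. f n * z ^ n)"
  proof (rule summable_comparison_test)
    show "\<exists>N. \<forall>n\<ge>N. norm (f n * z ^ n) \<le> C * (1 / 2) ^ n"
    proof (intro exI allI impI)
      fix n :: nat
      have "norm (f n * z ^ n) = norm (f n) * w ^ n"
        by (simp add: nz norm_mult norm_power)
      also have "\<dots> \<le> C * q ^ n * w ^ n"
        using w by (intro mult_right_mono bound) simp
      also have "\<dots> = C * (1 / 2) ^ n"
        using q by (simp add: w_def power_divide power_mult_distrib)
      finally show "norm (f n * z ^ n) \<le> C * (1 / 2) ^ n" .
    qed
    show "summable (\<lambda>n. C * (1 / 2 :: real) ^ n)"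
      by (intro summable_mult summable_geometric) simp
  qed
  hence "conv_radius f \<ge> norm z" by (rule conv_radius_geI)
  moreover have "norm z > 0" using w nz by simp
  ultimately show "0 < conv_radius f"
    using ereal_less(2) less_le_trans by blast
qed

lemma fps_nth_nonneg_if_eval_fps_nonneg_at_right_0:
  fixes g :: "real fps"
  assumes conv: "fps_conv_radius g > 0"
    and nonneg: "eventually (\<lambda>r. eval_fps g r \<ge> 0) (at_right 0)"
    and below: "\<And>n. n < m \<Longrightarrow> fps_nth g n = 0"
  shows "fps_nth g m \<ge> 0"
proof (cases "g = 0")
  case False
  have m: "m \<le> subdegree g" using False below by (rule subdegree_geI)
  have "continuous (at 0 within {0<..}) (eval_fps (fps_shift m g))"
    by (rule continuous_eval_fps) (use conv in \<open>simp add: zero_ereal_def\<close>)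
  hence lim: "(eval_fps (fps_shift m g) \<longlongrightarrow> fps_nth g m) (at_right 0)"
    by (simp add: continuous_within eval_fps_at_0)
  obtain \<rho> where \<rho>: "0 < \<rho>" "ereal \<rho> < fps_conv_radius g"
    using ereal_dense2[OF conv] by (metis ereal_less(2))
  have "eventually (\<lambda>r. r \<in> {0<..<\<rho>}) (at_right 0)"
    using \<rho>(1) by (rule eventually_at_right_real)
  with nonneg have "eventually (\<lambda>r. eval_fps (fps_shift m g) r \<ge> 0) (at_right 0)"
  proof eventually_elim
    case (elim r)
    hence "norm r < fps_conv_radius g" using \<rho>(2) by (simp add: order.strict_trans[of _ "ereal \<rho>"])
    with elim show ?case by (simp add: eval_fps_shift[OF m])
  qed
  with lim show ?thesis by (rule tendsto_lowerbound) simp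
qed simp

lemma dvd_if_sin_pi_multiple_eq_0:
  assumes "N > 0" "sin (real m * pi / real N) = 0"
  shows "N dvd m"
proof -
  obtain i :: int where "real m * pi / real N = of_int i * pi"
    using assms(2) sin_zero_iff_int2 by blast
  hence "of_int (int m) = (of_int (i * int N) :: real)" using assms(1) by (simp add: field_simps)
  hence "int m = i * int N" by (simp only: of_int_eq_iff)
  thus ?thesis by (simp flip: int_dvd_int_iff)
qed

lemma dvd_if_cos_pi_multiple_eq_1:
  assumes "N > 0" "cos (real m * pi / real N) = 1"
  shows "2 * N dvd m"
proof -
  obtain k :: int where "real m * pi / real N = of_int k * 2 * pi"
    using assms(2) cos_one_2pi_int by blast
  hence "of_int (int m) = (of_int (k * int (2 * N)) :: real)" using assms(1) by (simp add: field_simps)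
  hence "int m = k * int (2 * N)" by (simp only: of_int_eq_iff)
  thus ?thesis by (simp flip: int_dvd_int_iff)
qed

lemma even_multiple_and_Im_pos_if_Im_nonneg_on_rays:
  fixes c :: complex
  assumes N: "N > 0" and "c \<noteq> 0" and Re: "N dvd m \<Longrightarrow> Re c = 0"
    and nonneg: "\<And>\<omega>. \<omega> ^ N \<in> \<real> \<Longrightarrow> Im (c * \<omega> ^ m) \<ge> 0"
  shows "2 * N dvd m \<and> Im c > 0"
proof -
  define z where "z = cis (real m * pi / real N)"
  have nonneg_z: "Im (c * z ^ j) \<ge> 0" for j
  proof -
    have "cis (pi / real N) ^ N = -1" using N by (simp add: Complex.DeMoivre)
    hence "(cis (pi / real N) ^ j) ^ N = (-1) ^ j"
      by (simp flip: power_mult add: mult.commute[of j] power_mult[of _ N])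
    hence "Im (c * (cis (pi / real N) ^ j) ^ m) \<ge> 0" by (intro nonneg) simp
    moreover have "(cis (pi / real N) ^ j) ^ m = z ^ j"
      by (simp add: z_def Complex.DeMoivre field_simps)
    ultimately show ?thesis by simp
  qed
  show ?thesis
  proof (cases "z = 1")
    case True
    hence "2 * N dvd m" using N by (intro dvd_if_cos_pi_multiple_eq_1) (auto simp: z_def complex_eq_iff)
    moreover have "Im c \<ge> 0" using nonneg_z[of 0] by simp
    ultimately show ?thesis using Re \<open>c \<noteq> 0\<close> by (auto simp: complex_eq_iff)
  next
    case False
    txt \<open>The powers of the \<open>2N\<close>-th root of unity \<open>z \<noteq> 1\<close> sum to zero, so the nonnegative
      numbers \<open>Im (c z\<^sup>j)\<close> all vanish.\<close>
    have "z ^ (2 * N) = cis (2 * pi * real m)"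
      using N by (simp add: z_def Complex.DeMoivre field_simps)
    also have "\<dots> = 1" by (rule cis_multiple_2pi) simp
    finally have "(\<Sum>j<2 * N. z ^ j) = 0" using False by (simp add: geometric_sum)
    moreover have "(\<Sum>j<2 * N. Im (c * z ^ j)) = Im (c * (\<Sum>j<2 * N. z ^ j))"
      by (simp only: Im_sum sum_distrib_left)
    ultimately have "(\<Sum>j<2 * N. Im (c * z ^ j)) = 0" by simp
    hence "\<forall>j\<in>{..<2 * N}. Im (c * z ^ j) = 0"
      using nonneg_z by (subst (asm) sum_nonneg_eq_0_iff) auto
    hence "Im c = 0" "Im (c * z) = 0"
      using N by (auto dest: bspec[of _ _ 0] bspec[of _ _ 1])
    with \<open>c \<noteq> 0\<close> have "Im z = 0" by (simp add: complex_eq_iff)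
    hence "N dvd m" using N by (intro dvd_if_sin_pi_multiple_eq_0) (simp_all add: z_def)
    with Re \<open>Im c = 0\<close> \<open>c \<noteq> 0\<close> show ?thesis by (simp add: complex_eq_iff)
  qed
qed

text \<open>\<open>real_part_XN N \<phi>\<close> and \<open>residual_XN N \<phi>\<close> are the series \<open>\<psi>\<^sub>0\<close> and \<open>\<chi>\<close> above.\<close>

definition real_part_XN :: "nat \<Rightarrow> complex fps \<Rightarrow> complex fps" where
  "real_part_XN N \<phi> = Abs_fps (\<lambda>k. of_real (Re (fps_nth \<phi> (k * N))))"

definition residual_XN :: "nat \<Rightarrow> complex fps \<Rightarrow> complex fps" where
  "residual_XN N \<phi> =
     Abs_fps (\<lambda>n. if N dvd n then \<i> * of_real (Im (fps_nth \<phi> n)) else fps_nth \<phi> n)"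

lemma fps_decompose_XN:
  assumes "N > 0"
  shows "\<phi> = (real_part_XN N \<phi> oo fps_X ^ N) + residual_XN N \<phi>"
proof (rule fps_ext)
  fix n
  show "fps_nth \<phi> n = fps_nth ((real_part_XN N \<phi> oo fps_X ^ N) + residual_XN N \<phi>) n"
    using assms
    by (cases "N dvd n") (auto simp: fps_compose_X_power_nth real_part_XN_def residual_XN_def
        complex_eq_iff)
qed

lemma residual_XN_uminus: "residual_XN N (- \<phi>) = - residual_XN N \<phi>"
  by (rule fps_ext) (simp add: residual_XN_def)

lemma Im_residual_XN_nth_mult_power:
  assumes "t ^ N \<in> \<real>"
  shows "Im (fps_nth (residual_XN N \<phi>) n * t ^ n) = Im (fps_nth \<phi> n * t ^ n)"
proof (cases "N dvd n")
  case True
  then obtain k where "n = N * k" by blast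
  hence "t ^ n \<in> \<real>" using assms by (simp add: power_mult)
  then obtain s where "t ^ n = of_real s" by (auto elim: Reals_cases)
  with True show ?thesis by (simp add: residual_XN_def)
qed (simp add: residual_XN_def)

lemma real_coeffs_real_part_XN: "real_coeffs (real_part_XN N \<phi>)"
  by (simp add: real_coeffs_def real_part_XN_def)

lemma convergent_real_part_XN:
  assumes "N > 0" "convergent_ps \<phi>"
  shows "convergent_ps (real_part_XN N \<phi>)"
proof -
  obtain C q where q: "0 < q" and bound: "\<And>n. norm (fps_nth \<phi> n) \<le> C * q ^ n"
    using assms(2) by (auto simp: convergent_ps_def fps_conv_radius_def conv_radius_pos_iff_geometric_bound)
  have "norm (fps_nth (real_part_XN N \<phi>) k) \<le> C * (q ^ N) ^ k" for k
  proof -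
    have "norm (fps_nth (real_part_XN N \<phi>) k) \<le> norm (fps_nth \<phi> (k * N))"
      by (simp add: real_part_XN_def abs_Re_le_cmod)
    also have "\<dots> \<le> C * (q ^ N) ^ k" by (metis bound mult.commute power_mult)
    finally show ?thesis .
  qed
  with q show ?thesis
    unfolding convergent_ps_def fps_conv_radius_def conv_radius_pos_iff_geometric_bound
    by (intro exI[of _ C] exI[of _ "q ^ N"]) simp
qed

lemma convergent_residual_XN:
  assumes "convergent_ps \<phi>"
  shows "convergent_ps (residual_XN N \<phi>)"
proof -
  obtain C q where q: "0 < q" and bound: "\<And>n. norm (fps_nth \<phi> n) \<le> C * q ^ n"
    using assms by (auto simp: convergent_ps_def fps_conv_radius_def conv_radius_pos_iff_geometric_bound)
  have "norm (fps_nth (residual_XN N \<phi>) n) \<le> C * q ^ n" for n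
    using bound[of n] abs_Im_le_cmod[of "fps_nth \<phi> n"] by (simp add: residual_XN_def norm_mult)
  with q show ?thesis
    by (auto simp: convergent_ps_def fps_conv_radius_def conv_radius_pos_iff_geometric_bound)
qed

lemma sums_Im_eval_fps_on_ray:
  assumes "\<omega> ^ N \<in> \<real>" "norm (of_real r * \<omega>) < fps_conv_radius \<phi>"
  shows "(\<lambda>n. Im (fps_nth (residual_XN N \<phi>) n * \<omega> ^ n) * r ^ n) sums Im (eval_fps \<phi> (of_real r * \<omega>))"
proof -
  let ?t = "of_real r * \<omega>"
  have "?t ^ N \<in> \<real>" using assms(1) by (simp add: power_mult_distrib)
  have "(\<lambda>n. Im (fps_nth \<phi> n * ?t ^ n)) sums Im (eval_fps \<phi> ?t)"
    by (intro sums_Im sums_eval_fps assms(2))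
  hence "(\<lambda>n. Im (fps_nth (residual_XN N \<phi>) n * ?t ^ n)) sums Im (eval_fps \<phi> ?t)"
    using \<open>?t ^ N \<in> \<real>\<close> by (simp only: Im_residual_XN_nth_mult_power)
  moreover have "fps_nth (residual_XN N \<phi>) n * ?t ^ n = r ^ n *\<^sub>R (fps_nth (residual_XN N \<phi>) n * \<omega> ^ n)" for n
    by (simp add: power_mult_distrib scaleR_conv_of_real mult_ac)
  ultimately show ?thesis by (simp only: scaleR_complex.sel(2) mult.commute)
qed

lemma Im_leading_coeff_residual_XN_nonneg:
  assumes conv: "fps_conv_radius \<phi> > 0"
    and nonneg: "\<forall>t. in_conv_domain \<phi> t \<and> t ^ N \<in> \<real> \<longrightarrow> Im (eval_fps \<phi> t) \<ge> 0"
    and \<omega>: "\<omega> ^ N \<in> \<real>"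
  defines "h \<equiv> residual_XN N \<phi>"
  shows "Im (fps_nth h (subdegree h) * \<omega> ^ subdegree h) \<ge> 0"
proof -
  define g where "g = Abs_fps (\<lambda>n. Im (fps_nth h n * \<omega> ^ n))"
  obtain R where R: "0 < R" "ereal R < fps_conv_radius \<phi>"
    using ereal_dense2[OF conv] by (metis ereal_less(2))
  define \<rho> where "\<rho> = R / (norm \<omega> + 1)"
  have "0 < norm \<omega> + 1" by (simp add: add_nonneg_pos)
  hence \<rho>: "0 < \<rho>" "\<rho> * norm \<omega> < R"
    using R(1) by (simp_all add: \<rho>_def field_simps)
  have dom: "in_conv_domain \<phi> (of_real r * \<omega>)" if "0 \<le> r" "r \<le> \<rho>" for r
  proof -
    have "r * norm \<omega> < R"
      using that \<rho>(2) by (meson le_less_trans mult_right_mono norm_ge_zero)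
    thus ?thesis using that R(2)
      by (auto simp: in_conv_domain_def norm_mult intro: order.strict_trans[of _ "ereal R"])
  qed
  have ray_sums: "(\<lambda>n. fps_nth g n * r ^ n) sums Im (eval_fps \<phi> (of_real r * \<omega>))"
    if "0 \<le> r" "r \<le> \<rho>" for r
    using sums_Im_eval_fps_on_ray[OF \<omega>] dom[OF that] by (simp add: g_def h_def in_conv_domain_def)
  have "fps_conv_radius g \<ge> norm \<rho>"
    unfolding fps_conv_radius_def
    by (rule conv_radius_geI, rule sums_summable, rule ray_sums) (use \<rho> in auto)
  hence "fps_conv_radius g > 0"
    using \<rho>(1) by (simp add: less_le_trans[of 0 "ereal \<rho>"])
  moreover have "eventually (\<lambda>r. eval_fps g r \<ge> 0) (at_right 0)"
    using eventually_at_right_real[OF \<rho>(1)]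
  proof eventually_elim
    case (elim r)
    hence "eval_fps g r = Im (eval_fps \<phi> (of_real r * \<omega>))"
      unfolding eval_fps_def[of g] by (simp add: sums_unique[OF ray_sums])
    also have "\<dots> \<ge> 0"
      using nonneg dom[of r] elim \<omega> by (simp add: power_mult_distrib)
    finally show ?case .
  qed
  moreover have "fps_nth g n = 0" if "n < subdegree h" for n
    using nth_less_subdegree_zero[OF that] by (simp add: g_def)
  ultimately have "fps_nth g (subdegree h) \<ge> 0"
    by (rule fps_nth_nonneg_if_eval_fps_nonneg_at_right_0)
  thus ?thesis by (simp add: g_def)
qed

lemma residual_XN_leading_coeff:
  assumes N: "N > 0" and conv: "fps_conv_radius \<phi> > 0" and "fps_nth \<phi> 0 = 0"
    and nonneg: "\<forall>t. in_conv_domain \<phi> t \<and> t ^ N \<in> \<real> \<longrightarrow> Im (eval_fps \<phi> t) \<ge> 0"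
    and "residual_XN N \<phi> \<noteq> 0"
  shows "\<exists>L\<ge>1. subdegree (residual_XN N \<phi>) = 2 * L * N
                \<and> Im (fps_nth (residual_XN N \<phi>) (2 * L * N)) > 0"
proof -
  define h where "h = residual_XN N \<phi>"
  define m where "m = subdegree h"
  have hm: "fps_nth h m \<noteq> 0" using assms(5) by (simp add: h_def m_def)
  have "2 * N dvd m \<and> Im (fps_nth h m) > 0"
  proof (rule even_multiple_and_Im_pos_if_Im_nonneg_on_rays[OF N hm])
    show "Re (fps_nth h m) = 0" if "N dvd m" using that by (simp add: h_def residual_XN_def)
    show "Im (fps_nth h m * \<omega> ^ m) \<ge> 0" if "\<omega> ^ N \<in> \<real>" for \<omega>
      unfolding h_def m_def using conv nonneg that by (rule Im_leading_coeff_residual_XN_nonneg)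
  qed
  then obtain L where L: "m = 2 * N * L" and pos: "Im (fps_nth h m) > 0"
    by (meson dvdE)
  have "fps_nth h 0 = 0" using assms(3) by (simp add: h_def residual_XN_def)
  with hm L have "L \<ge> 1" by (cases L) auto
  with L pos show ?thesis by (auto simp: h_def m_def mult_ac)
qed

lemma residual_XN_factorization:
  assumes "N > 0" "convergent_ps \<phi>" "fps_nth \<phi> 0 = 0"
    and "\<forall>t. in_conv_domain \<phi> t \<and> t ^ N \<in> \<real> \<longrightarrow> Im (eval_fps \<phi> t) \<ge> 0"
  shows "\<exists>L b \<psi>1. L \<ge> 1 \<and> b \<ge> 0 \<and> convergent_ps \<psi>1 \<and> fps_nth \<psi>1 0 = 1 \<and>
           residual_XN N \<phi> = fps_const (\<i> * complex_of_real b) * fps_X ^ (2 * L * N) * \<psi>1"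
proof (cases "residual_XN N \<phi> = 0")
  case True
  thus ?thesis by (intro exI[of _ 1] exI[of _ 0] exI[of _ 1]) (simp add: convergent_ps_def)
next
  case False
  define h where "h = residual_XN N \<phi>"
  obtain L where L: "L \<ge> 1" "subdegree h = 2 * L * N" "Im (fps_nth h (2 * L * N)) > 0"
    using residual_XN_leading_coeff[OF assms(1) _ assms(3,4) False] assms(2)
    by (auto simp: h_def convergent_ps_def)
  define m where "m = 2 * L * N"
  define b where "b = Im (fps_nth h m)"
  have b: "b > 0" using L(3) by (simp add: b_def m_def)
  have hm: "fps_nth h m = \<i> * complex_of_real b"
    by (simp add: h_def b_def m_def residual_XN_def)
  define \<psi>1 where "\<psi>1 = fps_const (inverse (\<i> * complex_of_real b)) * fps_shift m h"
  have "convergent_ps \<psi>1"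
    using b convergent_residual_XN[OF assms(2)]
    by (simp add: \<psi>1_def h_def convergent_ps_def fps_conv_radius_cmult_left)
  moreover have "fps_nth \<psi>1 0 = 1" using b by (simp add: \<psi>1_def hm field_simps)
  moreover have "h = fps_const (\<i> * complex_of_real b) * fps_X ^ m * \<psi>1"
  proof -
    have "h = fps_shift m h * fps_X ^ m"
      by (simp add: fps_shift_times_fps_X_power L(2) m_def)
    also have "\<dots> = fps_const (\<i> * complex_of_real b) * fps_X ^ m * \<psi>1"
      using b by (simp add: \<psi>1_def mult_ac flip: fps_const_mult)
    finally show ?thesis .
  qed
  ultimately show ?thesis using L(1) b by (intro exI[of _ L] exI[of _ b] exI[of _ \<psi>1]) (simp add: h_def m_def)
qed

lemma residual_XN_eq_0_if_real_on_rays: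
  assumes N: "N > 0" and conv: "fps_conv_radius \<phi> > 0" and "fps_nth \<phi> 0 = 0"
    and real: "\<forall>t. in_conv_domain \<phi> t \<and> t ^ N \<in> \<real> \<longrightarrow> eval_fps \<phi> t \<in> \<real>"
  shows "residual_XN N \<phi> = 0"
proof (rule ccontr)
  assume nz: "residual_XN N \<phi> \<noteq> 0"
  have Im_eq_0: "Im (eval_fps \<phi> t) = 0" "Im (eval_fps (- \<phi>) t) = 0"
    if "in_conv_domain \<phi> t \<and> t ^ N \<in> \<real>" for t
    using real that by (auto simp: in_conv_domain_def eval_fps_minus complex_is_Real_iff)
  obtain L where "subdegree (residual_XN N \<phi>) = 2 * L * N"
      and pos: "Im (fps_nth (residual_XN N \<phi>) (2 * L * N)) > 0"
    using residual_XN_leading_coeff[OF N conv assms(3) _ nz] Im_eq_0(1) by auto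
  moreover obtain L' where "subdegree (residual_XN N (- \<phi>)) = 2 * L' * N"
      and pos': "Im (fps_nth (residual_XN N (- \<phi>)) (2 * L' * N)) > 0"
    using residual_XN_leading_coeff[of N "- \<phi>"] N conv assms(3) Im_eq_0(2) nz
    by (auto simp: residual_XN_uminus in_conv_domain_def)
  ultimately have "L' = L" using N by (simp add: residual_XN_uminus)
  with pos pos' show False by (simp add: residual_XN_uminus)
qed

lemma eval_fps_compose_X_power_real:
  fixes \<psi> :: "complex fps"
  assumes "N > 0" "real_coeffs \<psi>" "norm t < fps_conv_radius (\<psi> oo fps_X ^ N)" "t ^ N \<in> \<real>"
  shows "eval_fps (\<psi> oo fps_X ^ N) t \<in> \<real>"
proof -
  have "Im (fps_nth (\<psi> oo fps_X ^ N) n * t ^ n) = 0" for n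
  proof (cases "N dvd n")
    case True
    then obtain k where "n = N * k" by blast
    hence "t ^ n \<in> \<real>" using assms(4) by (simp add: power_mult)
    moreover have "fps_nth \<psi> (n div N) \<in> \<real>" using assms(2) by (simp add: real_coeffs_def)
    ultimately show ?thesis using True assms(1)
      by (simp add: fps_compose_X_power_nth complex_is_Real_iff)
  qed (use assms(1) in \<open>simp add: fps_compose_X_power_nth\<close>)
  moreover have "(\<lambda>n. Im (fps_nth (\<psi> oo fps_X ^ N) n * t ^ n)) sums Im (eval_fps (\<psi> oo fps_X ^ N) t)"
    by (intro sums_Im sums_eval_fps assms(3))
  ultimately show ?thesis by (simp add: complex_is_Real_iff sums_0 sums_unique2)
qed

lemma real_on_rays_iff_compose_X_power:
  assumes N: "N > 0" and "convergent_ps \<phi>" "fps_nth \<phi> 0 = 0"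
  shows "(\<forall>t. in_conv_domain \<phi> t \<and> t ^ N \<in> \<real> \<longrightarrow> eval_fps \<phi> t \<in> \<real>)
           \<longleftrightarrow> (\<exists>\<psi>. convergent_ps \<psi> \<and> real_coeffs \<psi> \<and> \<phi> = (\<psi> oo fps_X ^ N))"
proof
  assume "\<forall>t. in_conv_domain \<phi> t \<and> t ^ N \<in> \<real> \<longrightarrow> eval_fps \<phi> t \<in> \<real>"
  hence "residual_XN N \<phi> = 0"
    using assms(2,3) by (intro residual_XN_eq_0_if_real_on_rays[OF N]) (simp_all add: convergent_ps_def)
  hence "\<phi> = (real_part_XN N \<phi> oo fps_X ^ N)"
    using fps_decompose_XN[OF N, of \<phi>] by simp
  thus "\<exists>\<psi>. convergent_ps \<psi> \<and> real_coeffs \<psi> \<and> \<phi> = (\<psi> oo fps_X ^ N)"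
    using convergent_real_part_XN[OF N assms(2)] real_coeffs_real_part_XN by blast
next
  assume "\<exists>\<psi>. convergent_ps \<psi> \<and> real_coeffs \<psi> \<and> \<phi> = (\<psi> oo fps_X ^ N)"
  then obtain \<psi> where "real_coeffs \<psi>" "\<phi> = (\<psi> oo fps_X ^ N)" by blast
  thus "\<forall>t. in_conv_domain \<phi> t \<and> t ^ N \<in> \<real> \<longrightarrow> eval_fps \<phi> t \<in> \<real>"
    using eval_fps_compose_X_power_real[OF N] by (auto simp: in_conv_domain_def)
qed

theorem proposition3p3:
  fixes N :: nat and \<phi> :: "complex fps"
  assumes "N \<ge> 1"
    and "convergent_ps \<phi>"
    and "fps_nth \<phi> 0 = 0"
    and "\<forall>t. in_conv_domain \<phi> t \<and> t ^ N \<in> \<real> \<longrightarrow> Im (eval_fps \<phi> t) \<ge> 0"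
  shows "(\<exists>\<psi>0 (L::nat) (b::real) \<psi>1.
            convergent_ps \<psi>0 \<and> real_coeffs \<psi>0 \<and> L \<ge> 1 \<and> b \<ge> 0 \<and>
            convergent_ps \<psi>1 \<and> fps_nth \<psi>1 0 = 1 \<and>
            \<phi> = (\<psi>0 oo fps_X ^ N)
                + fps_const (\<i> * complex_of_real b) * fps_X ^ (2 * L * N) * \<psi>1)
       \<and> ((\<forall>t. in_conv_domain \<phi> t \<and> t ^ N \<in> \<real> \<longrightarrow> eval_fps \<phi> t \<in> \<real>)
           \<longleftrightarrow> (\<exists>\<psi>0. convergent_ps \<psi>0 \<and> real_coeffs \<psi>0 \<and> \<phi> = (\<psi>0 oo fps_X ^ N)))"
proof -
  have N: "N > 0" using assms(1) by simp
  obtain L b \<psi>1 where "L \<ge> 1" "b \<ge> 0" "convergent_ps \<psi>1" "fps_nth \<psi>1 0 = 1"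
      and "residual_XN N \<phi> = fps_const (\<i> * complex_of_real b) * fps_X ^ (2 * L * N) * \<psi>1"
    using residual_XN_factorization[OF N assms(2-4)] by blast
  moreover have "\<phi> = (real_part_XN N \<phi> oo fps_X ^ N) + residual_XN N \<phi>"
    using N by (rule fps_decompose_XN)
  ultimately show ?thesis
    using convergent_real_part_XN[OF N assms(2)] real_coeffs_real_part_XN
      real_on_rays_iff_compose_X_power[OF N assms(2,3)]
    by metis
qed

end
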